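(* Let $X$, $D_0$, $D_\infty$ be as constructed in the context, from data $\sigma_0$, $L$ with $c(L)=-k$, points $r_1,\dots,r_s$ and integers $k^i_j\ge2$, with resulting integers $l^i_j\ge 2$. The following are equivalent: (1) $D_\infty$ is the support of a divisor with positive normal bundle; (2) the intersection matrix of the components of $D_0$ is negative definite; (3) $\displaystyle\sum_{i=1}^s\frac{1}{[k^i_1,k^i_2,\dots,k^i_{n_i}]}<k$; (4) $\displaystyle\sum_{i=1}^s\frac{1}{[l^i_1,l^i_2,\dots,l^i_{m_i}]}>s-k$.
   Context: Let $\sigma_0$ be a compact Riemann surface, $L$ a holomorphic line bundle on it of degree $-k$, $k\ge1$, and $\bar L$ the $\mathbb P^1$-bundle obtained by gluing $L$ and its dual $L^{-1}$ via $a\mapsto 1/a$ off the zero sections; $\sigma_0$ is the zero section of $L$ (self-intersection $-k$) and $\sigma_\infty$ the zero section of $L^{-1}$ (self-intersection $k$). For each of given distinct points $r_1,\dots,r_s\in\sigma_0$ and given integers $k^i_1,\dots,k^i_{n_i}\ge2$, perform successive blow-ups starting at the point $r_i^\infty=\sigma_\infty\cap\bar L_{r_i}$ (and then at points of the exceptional curves in the chain between $\sigma_0$ and $\sigma_\infty$) so as to replace the chain $\sigma_0,\bar L_{r_i},\sigma_\infty$ by a chain $\sigma_0,\sigma^i_1,\dots,\sigma^i_{n_i},\tilde\sigma,\tau^i_{m_i},\dots,\tau^i_1,\sigma_\infty$ with self-intersections $\sigma^i_j\cdot\sigma^i_j=-k^i_j$, $\tilde\sigma\cdot\tilde\sigma=-1$,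 $\tau^i_j\cdot\tau^i_j=-l^i_j<-1$ ($\sigma^i_1$ being the strict transform of the fiber $\bar L_{r_i}$). Doing this at every $r_i$ yields a smooth projective surface $X$, in which $\sigma_\infty\cdot\sigma_\infty=k-s$. Put $D_\infty=\sigma_\infty+\sum_{i,j}\tau^i_j$ and $D_0=\sigma_0+\sum_{i,j}\sigma^i_j$. A divisor $Y=\sum_{i=1}^lY_i$ on a surface is the support of a divisor with positive normal bundle if there are positive integers $a_i$ with $(\sum a_iY_i)\cdot Y_j>0$ for all $j$. Continued fractions: $[a_1,\dots,a_n]=a_1-\cfrac{1}{a_2-\cfrac{1}{\ddots-\cfrac1{a_n}}}$. *)

theory Defs
  imports Complex_Main
begin

fun cfrac :: "int list \<Rightarrow> real" where
  "cfrac [] = 0"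
| "cfrac [a] = of_int a"
| "cfrac (a # b # rest) = of_int a - 1 / cfrac (b # rest)"

text \<open>Self-intersection numbers of the chain of curves lying in the fibre over r_i,
  listed from the strict transform of the fibre (adjacent to sigma_0) towards sigma_infinity.
  Blowing up the node between the curves at positions i and i+1 decreases both
  self-intersections by one and inserts a (-1)-curve between them.\<close>
definition blowup_node :: "int list \<Rightarrow> nat \<Rightarrow> int list" where
  "blowup_node xs i = take i xs @ [xs ! i - 1, -1, xs ! (i + 1) - 1] @ drop (i + 2) xs"

text \<open>Chains obtained as in the construction: first blow up r_i^infinity = sigma_infinity \<inter> fibre
  (fibre 0 becomes -1, new exceptional curve -1, and sigma_infinity drops by one), then
  blow up further points of exceptional curves of the chain, which (to keep a chain between
  sigma_0 and sigma_infinity and not change sigma_0 and sigma_infinity further) are nodes of the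
  chain strictly between sigma_0 and sigma_infinity.\<close>
inductive fibre_chain :: "int list \<Rightarrow> bool" where
  first: "fibre_chain [-1, -1]"
| node: "fibre_chain xs \<Longrightarrow> i + 1 < length xs \<Longrightarrow> fibre_chain (blowup_node xs i)"

text \<open>Components of a star-shaped configuration: None is the central curve, Some (i, j)
  is the (j+1)-st curve of the i-th arm, counted from the centre.\<close>
definition star_comps :: "nat \<Rightarrow> (nat \<Rightarrow> nat) \<Rightarrow> (nat \<times> nat) option set" where
  "star_comps s len = insert None {Some (i, j) | i j. i < s \<and> j < len i}"

fun star_form :: "int \<Rightarrow> (nat \<Rightarrow> nat \<Rightarrow> int) \<Rightarrow> (nat \<times> nat) option \<Rightarrow> (nat \<times> nat) option \<Rightarrow> int" where
  "star_form c a None None = c"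
| "star_form c a None (Some (i, j)) = (if j = 0 then 1 else 0)"
| "star_form c a (Some (i, j)) None = (if j = 0 then 1 else 0)"
| "star_form c a (Some (i, j)) (Some (i', j')) =
     (if i = i' then (if j = j' then a i j else if j = j' + 1 \<or> j' = j + 1 then 1 else 0) else 0)"

definition neg_definite :: "('c \<Rightarrow> 'c \<Rightarrow> int) \<Rightarrow> 'c set \<Rightarrow> bool" where
  "neg_definite Q S \<longleftrightarrow>
     (\<forall>x :: 'c \<Rightarrow> real. (\<exists>u\<in>S. x u \<noteq> 0) \<longrightarrow>
        (\<Sum>u\<in>S. \<Sum>v\<in>S. x u * of_int (Q u v) * x v) < 0)"

definition pos_normal_support :: "('c \<Rightarrow> 'c \<Rightarrow> int) \<Rightarrow> 'c set \<Rightarrow> bool" where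
  "pos_normal_support Q S \<longleftrightarrow>
     (\<exists>a :: 'c \<Rightarrow> int. (\<forall>u\<in>S. a u > 0) \<and> (\<forall>v\<in>S. (\<Sum>u\<in>S. a u * Q u v) > 0))"

end

theory Submission
  imports Defs
begin

(* Both D_0 and D_infinity are star-shaped configurations: a central curve with arms of
   self-intersections -k^i_j, resp. -l^i_j.  Blowing up a node leaves this
   product unchanged, so every fibre chain has the product of the chain (-1, -1); reading
   off the entries gives 1/[k^i] + 1/[l^i] = 1 for every i.
   (2) <-> (3): the contribution of one arm to the quadratic form, for a fixed value u of
   the centre, is maximised by completing squares along the arm; its maximum is
   u^2/[k^i_1, ..., k^i_{n_i}], so the form is -k u^2 + sum_i u^2/[k^i] at best.
   (1) <-> (4): given the weight C on the central curve, an arm admits positive integer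
   weights w meeting each of its curves positively iff w_0 [l^i] < C (for the sufficiency,
   after a common rescaling), so the condition at the central curve amounts to
   C (k - s) + sum_i C/[l^i] > 0.
   The sections are: transfer matrices and (3) <-> (4); continued fractions of sequences;
   the quadratic form of one arm; positive weights on one arm; bookkeeping for star-shaped
   intersection forms; (2) <-> (3); (1) <-> (4); the theorem. *)

type_synonym mat2 = "int \<times> int \<times> int \<times> int"

fun mat_mult :: "mat2 \<Rightarrow> mat2 \<Rightarrow> mat2" where
  "mat_mult (a, b, c, d) (e, f, g, h) = (a*e + b*g, a*f + b*h, c*e + d*g, c*f + d*h)"

fun det2 :: "mat2 \<Rightarrow> int" where
  "det2 (a, b, c, d) = a*d - b*c"

definition curve_mat :: "int \<Rightarrow> mat2" where
  "curve_mat x = (-x, -1, 1, 0)"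

fun chain_mat :: "int list \<Rightarrow> mat2" where
  "chain_mat [] = (1, 0, 0, 1)"
| "chain_mat (x # xs) = mat_mult (curve_mat x) (chain_mat xs)"

lemma mat_mult_assoc: "mat_mult (mat_mult A B) C = mat_mult A (mat_mult B C)"
  by (cases A; cases B; cases C) (simp add: algebra_simps)

lemma mat_mult_id [simp]: "mat_mult (1, 0, 0, 1) A = A" "mat_mult A (1, 0, 0, 1) = A"
  by (cases A; simp)+

lemma det2_mat_mult: "det2 (mat_mult A B) = det2 A * det2 B"
  by (cases A; cases B) (simp add: algebra_simps)

lemma det2_chain_mat: "det2 (chain_mat xs) = 1"
  by (induction xs) (simp_all add: det2_mat_mult curve_mat_def)

lemma chain_mat_append: "chain_mat (xs @ ys) = mat_mult (chain_mat xs) (chain_mat ys)"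
  by (induction xs) (simp_all add: mat_mult_assoc)

(* Blowing up a node of a chain does not change its transfer matrix: the chain
   (a - 1, -1, b - 1) has the same matrix as (a, b). *)
lemma chain_mat_blowup_node:
  assumes "i + 1 < length xs"
  shows "chain_mat (blowup_node xs i) = chain_mat xs"
proof -
  have blowup_local: "chain_mat [a - 1, -1, b - 1] = chain_mat [a, b]" for a b
    by (simp add: curve_mat_def algebra_simps)
  have "xs = take i xs @ [xs ! i, xs ! (i + 1)] @ drop (i + 2) xs"
    using assms id_take_nth_drop[of i xs] id_take_nth_drop[of "i + 1" xs]
    by (simp add: take_Suc_conv_app_nth)
  then have "chain_mat xs = chain_mat (take i xs @ [xs ! i, xs ! (i + 1)] @ drop (i + 2) xs)"
    by simp
  then show ?thesis
    unfolding blowup_node_def chain_mat_append blowup_local by simp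
qed

(* Hence every fibre chain has the transfer matrix of the chain (-1, -1). *)
lemma chain_mat_fibre_chain: "fibre_chain xs \<Longrightarrow> chain_mat xs = (0, -1, 1, -1)"
  by (induction rule: fibre_chain.induct) (simp_all add: chain_mat_blowup_node curve_mat_def)

lemma chain_mat_rev: "chain_mat xs = (a, b, d, e) \<Longrightarrow> chain_mat (rev xs) = (a, -d, -b, e)"
proof (induction xs arbitrary: a b d e)
  case (Cons x xs)
  obtain a' b' d' e' where "chain_mat xs = (a', b', d', e')"
    by (cases "chain_mat xs") auto
  with Cons show ?case
    by (auto simp: chain_mat_append curve_mat_def algebra_simps)
qed simp

lemma cfrac_chain_mat:
  assumes "cs \<noteq> []" "\<forall>c\<in>set cs. c \<ge> 2" "chain_mat (map uminus cs) = (a, b, d, e)"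
  shows "0 < d \<and> d < a \<and> cfrac cs = a / d"
  using assms
proof (induction cs arbitrary: a b d e)
  case Nil
  then show ?case by simp
next
  case (Cons c cs)
  show ?case
  proof (cases "cs = []")
    case True
    then show ?thesis using Cons.prems by (auto simp: curve_mat_def)
  next
    case False
    obtain a' b' d' e' where tail: "chain_mat (map uminus cs) = (a', b', d', e')"
      by (cases "chain_mat (map uminus cs)") auto
    have IH: "0 < d'" "d' < a'" "cfrac cs = a' / d'"
      using Cons.IH[OF False _ tail] Cons.prems by auto
    have c: "c \<ge> 2" using Cons.prems by simp
    have head: "a = c * a' - d'" "d = a'"
      using Cons.prems(3) tail by (auto simp: curve_mat_def)
    have "a' \<le> c * a' - a'" using c IH by (simp add: algebra_simps)
    then have "d < a" using IH head by linarith
    obtain c' cs' where "cs = c' # cs'" using False by (cases cs) auto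
    then have "cfrac (c # cs) = c - 1 / (a' / d')" using IH by simp
    also have "\<dots> = (c * a' - d') / a'" using IH by (simp add: field_simps)
    finally have "cfrac (c # cs) = a / d" using head by simp
    with \<open>d < a\<close> show ?thesis using IH head by simp
  qed
qed

lemma cfrac_complementary:
  assumes "ks \<noteq> []" "ls \<noteq> []" "\<forall>c\<in>set ks. c \<ge> 2" "\<forall>c\<in>set ls. c \<ge> 2"
    and "fibre_chain (map uminus ks @ [-1] @ rev (map uminus ls))"
  shows "1 / cfrac ks + 1 / cfrac ls = 1"
proof -
  obtain p x q y where K: "chain_mat (map uminus ks) = (p, x, q, y)"
    by (cases "chain_mat (map uminus ks)") auto
  obtain r b t e where L: "chain_mat (map uminus ls) = (r, b, t, e)"
    by (cases "chain_mat (map uminus ls)") auto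
  have cfK: "0 < q" "q < p" "cfrac ks = p / q"
    using cfrac_chain_mat[OF assms(1,3) K] by auto
  have cfL: "cfrac ls = r / t"
    using cfrac_chain_mat[OF assms(2,4) L] by auto
  have det: "p * y - x * q = 1"
    using det2_chain_mat[of "map uminus ks"] K by simp
  have "mat_mult (p, x, q, y) (mat_mult (1, -1, 1, 0) (r, -t, -b, e)) = (0, -1, 1, -1)"
    using chain_mat_fibre_chain[OF assms(5)] K chain_mat_rev[OF L]
    by (simp add: chain_mat_append curve_mat_def)
  then have e1: "p * (r + b) + x * r = 0" and e2: "p * (-t - e) + x * (-t) = -1"
    and e3: "q * (r + b) + y * r = 1" and e4: "q * (-t - e) + y * (-t) = -1"
    by (simp_all add: algebra_simps)
  have "r = p" using e1 e3 det by algebra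
  moreover have "t = p - q" using e2 e4 det by algebra
  ultimately have "cfrac ls = p / (p - q)" using cfL by simp
  then have "1 / cfrac ks + 1 / cfrac ls = q / p + (p - q) / p" using cfK by simp
  also have "\<dots> = 1" using cfK by (simp add: field_simps)
  finally show ?thesis .
qed

lemma cfrac_sums_complementary:
  assumes hn: "\<forall>i<s. n i \<ge> 1" and hm: "\<forall>i<s. m i \<ge> 1"
    and hkk: "\<forall>i<s. \<forall>j<n i. kk i j \<ge> 2" and hll: "\<forall>i<s. \<forall>j<m i. ll i j \<ge> 2"
    and hchain: "\<forall>i<s. fibre_chain
        (map (\<lambda>j. - kk i j) [0..<n i] @ [-1] @ rev (map (\<lambda>j. - ll i j) [0..<m i]))"
  shows "(\<Sum>i<s. 1 / cfrac (map (ll i) [0..<m i])) = real s - (\<Sum>i<s. 1 / cfrac (map (kk i) [0..<n i]))"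
proof -
  have "1 / cfrac (map (ll i) [0..<m i]) = 1 - 1 / cfrac (map (kk i) [0..<n i])" if i: "i < s" for i
  proof -
    have "1 / cfrac (map (kk i) [0..<n i]) + 1 / cfrac (map (ll i) [0..<m i]) = 1"
      by (rule cfrac_complementary) (use hn hm hkk hll hchain i in \<open>auto simp: comp_def\<close>)
    then show ?thesis by simp
  qed
  then have "(\<Sum>i<s. 1 / cfrac (map (ll i) [0..<m i])) = (\<Sum>i<s. 1 - 1 / cfrac (map (kk i) [0..<n i]))"
    by (intro sum.cong) auto
  then show ?thesis by (simp add: sum_subtractf)
qed

definition cfrac_seq :: "(nat \<Rightarrow> int) \<Rightarrow> nat \<Rightarrow> real" where
  "cfrac_seq a n = cfrac (map a [0..<n])"

lemma map_upt_Suc_shift: "map a [0..<Suc n] = a 0 # map (\<lambda>j. a (Suc j)) [0..<n]"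
  by (induction n) auto

lemma cfrac_seq_one: "cfrac_seq a 1 = a 0"
  by (simp add: cfrac_seq_def)

lemma cfrac_seq_Suc: "n \<ge> 1 \<Longrightarrow> cfrac_seq a (Suc n) = a 0 - 1 / cfrac_seq (\<lambda>j. a (Suc j)) n"
  unfolding cfrac_seq_def map_upt_Suc_shift
  by (cases n) (simp_all add: map_upt_Suc_shift del: upt_Suc)

(* Continued fractions with all entries >= 2 exceed 1, so the recursion never divides by 0. *)
lemma cfrac_seq_gt_1:
  assumes "n \<ge> 1" "\<forall>j<n. a j \<ge> 2"
  shows "cfrac_seq a n > 1"
proof -
  obtain p b d e where "chain_mat (map uminus (map a [0..<n])) = (p, b, d, e)"
    by (cases "chain_mat (map uminus (map a [0..<n]))") auto
  then have "0 < d \<and> d < p \<and> cfrac (map a [0..<n]) = p / d"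
    using assms by (intro cfrac_chain_mat) auto
  then show ?thesis unfolding cfrac_seq_def by simp
qed

lemma square_bound: "(c::real) > 0 \<Longrightarrow> 2*u*v - c*v^2 \<le> u^2/c"
proof -
  assume c: "c > 0"
  have "u^2/c - (2*u*v - c*v^2) = (u - c*v)^2/c"
    using c by (simp add: field_simps power2_eq_square)
  also have "\<dots> \<ge> 0" using c by simp
  finally show ?thesis by simp
qed

lemma square_bound_attained: "(c::real) > 0 \<Longrightarrow> 2*u*(u/c) - c*(u/c)^2 = u^2/c"
  by (simp add: field_simps power2_eq_square)

(* The contribution of an arm to the intersection form, given the value u on the central
   curve: y_j is the value on the j-th arm curve, of self-intersection -a_j, and the arm meets
   the centre in its curve 0.  The term u * y 0 is the arm's share of the centre-arm crossing terms. *)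
definition arm_form :: "(nat \<Rightarrow> int) \<Rightarrow> nat \<Rightarrow> real \<Rightarrow> (nat \<Rightarrow> real) \<Rightarrow> real" where
  "arm_form a n u y = u * y 0 + (\<Sum>j<n. y j *
     ((if j = 0 then u else y (j - 1)) - of_int (a j) * y j + (if j + 1 < n then y (j + 1) else 0)))"

lemma arm_form_one: "arm_form a 1 u y = 2*u*y 0 - a 0 * (y 0)^2"
  by (simp add: arm_form_def power2_eq_square algebra_simps)

lemma arm_form_Suc:
  assumes "n \<ge> 1"
  shows "arm_form a (Suc n) u y
    = 2*u*y 0 - a 0 * (y 0)^2 + arm_form (\<lambda>j. a (Suc j)) n (y 0) (\<lambda>j. y (Suc j))"
proof -
  let ?row = "\<lambda>j. y j * ((if j = 0 then u else y (j - 1)) - of_int (a j) * y j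
      + (if j + 1 < Suc n then y (j + 1) else 0))"
  have "(\<Sum>j<n. ?row (Suc j)) = (\<Sum>j<n. y (Suc j) * ((if j = 0 then y 0 else y (Suc (j - 1)))
      - of_int (a (Suc j)) * y (Suc j) + (if j + 1 < n then y (Suc (j + 1)) else 0)))"
    by (rule sum.cong) (auto simp: not0_implies_Suc)
  then show ?thesis
    unfolding arm_form_def sum.lessThan_Suc_shift using assms
    by (simp add: power2_eq_square algebra_simps)
qed

(* The recursion of arm_form, rewritten so that each step completes one square. *)
lemma arm_form_Suc_cfrac:
  assumes "n \<ge> 1"
  shows "arm_form a (Suc n) u y = 2*u*y 0 - cfrac_seq a (Suc n) * (y 0)^2
    + (arm_form (\<lambda>j. a (Suc j)) n (y 0) (\<lambda>j. y (Suc j)) - (y 0)^2 / cfrac_seq (\<lambda>j. a (Suc j)) n)"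
  unfolding arm_form_Suc[OF assms] cfrac_seq_Suc[OF assms] by (simp add: algebra_simps)

lemma arm_form_bound:
  assumes "n \<ge> 1" "\<forall>j<n. a j \<ge> 2"
  shows "arm_form a n u y \<le> u^2 / cfrac_seq a n"
  using assms
proof (induction n arbitrary: a u y rule: nat_induct_at_least)
  case base
  have "real_of_int (a 0) > 0" using base by auto
  then show ?case
    unfolding arm_form_one cfrac_seq_one by (rule square_bound)
next
  case (Suc n)
  have tail: "arm_form (\<lambda>j. a (Suc j)) n (y 0) (\<lambda>j. y (Suc j)) \<le> (y 0)^2 / cfrac_seq (\<lambda>j. a (Suc j)) n"
    using Suc.IH Suc.prems by auto
  have "cfrac_seq a (Suc n) > 0"
    using cfrac_seq_gt_1[of "Suc n" a] Suc.prems by simp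
  then have "2*u*y 0 - cfrac_seq a (Suc n) * (y 0)^2 \<le> u^2 / cfrac_seq a (Suc n)"
    by (rule square_bound)
  with tail show ?case
    unfolding arm_form_Suc_cfrac[OF Suc.hyps] by linarith
qed

lemma arm_form_attained:
  assumes "n \<ge> 1" "\<forall>j<n. a j \<ge> 2"
  shows "\<exists>y. arm_form a n u y = u^2 / cfrac_seq a n"
  using assms
proof (induction n arbitrary: a u rule: nat_induct_at_least)
  case base
  have "real_of_int (a 0) > 0" using base by auto
  then have "arm_form a 1 u (\<lambda>_. u / a 0) = u^2 / cfrac_seq a 1"
    unfolding arm_form_one cfrac_seq_one by (rule square_bound_attained)
  then show ?case by blast
next
  case (Suc n)
  define v where "v = u / cfrac_seq a (Suc n)"
  obtain y' where y': "arm_form (\<lambda>j. a (Suc j)) n v y' = v^2 / cfrac_seq (\<lambda>j. a (Suc j)) n"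
    using Suc.IH Suc.prems by fastforce
  define y where "y j = (if j = 0 then v else y' (j - 1))" for j
  have y: "y 0 = v" "(\<lambda>j. y (Suc j)) = y'" by (auto simp: y_def)
  have "cfrac_seq a (Suc n) > 0"
    using cfrac_seq_gt_1[of "Suc n" a] Suc.prems by simp
  have "arm_form a (Suc n) u y = 2*u*v - cfrac_seq a (Suc n) * v^2"
    unfolding arm_form_Suc_cfrac[OF Suc.hyps] y y' by simp
  also have "\<dots> = u^2 / cfrac_seq a (Suc n)"
    unfolding v_def by (rule square_bound_attained) fact
  finally show ?case by blast
qed

lemma arm_form_neg:
  assumes "n \<ge> 1" "\<forall>j<n. a j \<ge> 2" "j0 < n" "y j0 \<noteq> 0"
  shows "arm_form a n 0 y < 0"
  using assms
proof (induction n arbitrary: a y j0 rule: nat_induct_at_least)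
  case base
  then have "0 < of_int (a 0) * (y 0)^2" by auto
  then show ?case unfolding arm_form_one by simp
next
  case (Suc n)
  have tail: "arm_form (\<lambda>j. a (Suc j)) n (y 0) (\<lambda>j. y (Suc j)) \<le> (y 0)^2 / cfrac_seq (\<lambda>j. a (Suc j)) n"
    using arm_form_bound[OF Suc.hyps(1)] Suc.prems by auto
  have cf: "cfrac_seq a (Suc n) > 0"
    using cfrac_seq_gt_1[of "Suc n" a] Suc.prems by simp
  show ?case
  proof (cases "y 0 = 0")
    case False
    with cf have "cfrac_seq a (Suc n) * (y 0)^2 > 0" by simp
    with tail show ?thesis
      unfolding arm_form_Suc_cfrac[OF Suc.hyps] by simp
  next
    case True
    then obtain j1 where "j0 = Suc j1" using Suc.prems by (cases j0) auto
    then have "arm_form (\<lambda>j. a (Suc j)) n 0 (\<lambda>j. y (Suc j)) < 0"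
      using Suc.IH[of "\<lambda>j. a (Suc j)" j1 "\<lambda>j. y (Suc j)"] Suc.prems by auto
    with True show ?thesis
      unfolding arm_form_Suc[OF Suc.hyps] by simp
  qed
qed

definition arm_positive :: "(nat \<Rightarrow> int) \<Rightarrow> nat \<Rightarrow> int \<Rightarrow> (nat \<Rightarrow> int) \<Rightarrow> bool" where
  "arm_positive l m C w \<longleftrightarrow> (\<forall>j<m.
     (if j = 0 then C else w (j - 1)) - l j * w j + (if j + 1 < m then w (j + 1) else 0) > 0)"

lemma arm_positive_Suc:
  assumes "m \<ge> 1"
  shows "arm_positive l (Suc m) C w \<longleftrightarrow>
    C - l 0 * w 0 + w 1 > 0 \<and> arm_positive (\<lambda>j. l (Suc j)) m (w 0) (\<lambda>j. w (Suc j))"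
proof -
  have "(if i = 0 then w 0 else w (Suc (i - 1))) = w i" for i by (cases i) auto
  then show ?thesis unfolding arm_positive_def All_less_Suc2 using assms by simp
qed

lemma arm_positive_scale:
  assumes "c > 0" "arm_positive l m C w"
  shows "arm_positive l m (c * C) (\<lambda>j. c * w j)"
  unfolding arm_positive_def
proof (intro allI impI)
  fix j assume "j < m"
  then have "0 < (if j = 0 then C else w (j - 1)) - l j * w j + (if j + 1 < m then w (j + 1) else 0)"
    using assms(2) unfolding arm_positive_def by blast
  with assms(1) have "0 < c * ((if j = 0 then C else w (j - 1)) - l j * w j
      + (if j + 1 < m then w (j + 1) else 0))" by simp
  then show "0 < (if j = 0 then c * C else c * w (j - 1)) - l j * (c * w j)
      + (if j + 1 < m then c * w (j + 1) else 0)"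
    by (simp add: algebra_simps split: if_splits)
qed

lemma arm_weights_bound:
  assumes "m \<ge> 1" "\<forall>j<m. l j \<ge> 2" "\<forall>j<m. w j > 0" "arm_positive l m C w"
  shows "of_int (w 0) * cfrac_seq l m < of_int C"
  using assms
proof (induction m arbitrary: l C w rule: nat_induct_at_least)
  case base
  then have "l 0 * w 0 < C" by (simp add: arm_positive_def)
  then have "real_of_int (l 0 * w 0) < real_of_int C" by (simp only: of_int_less_iff)
  then show ?case by (simp add: cfrac_seq_def algebra_simps)
next
  case (Suc m)
  let ?l' = "\<lambda>j. l (Suc j)"
  have centre: "C - l 0 * w 0 + w 1 > 0"
    and tail: "arm_positive ?l' m (w 0) (\<lambda>j. w (Suc j))"
    using Suc.prems(3) arm_positive_Suc[OF Suc.hyps] by auto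
  have "of_int (w 1) * cfrac_seq ?l' m < of_int (w 0)"
    using Suc.IH[OF _ _ tail] Suc.prems by auto
  moreover have "cfrac_seq ?l' m > 1"
    using cfrac_seq_gt_1[OF Suc.hyps] Suc.prems by auto
  ultimately have "w 0 / cfrac_seq ?l' m > w 1" by (simp add: field_simps)
  then have "of_int (w 0) * cfrac_seq l (Suc m) < l 0 * w 0 - w 1"
    unfolding cfrac_seq_Suc[OF Suc.hyps] by (simp add: algebra_simps)
  also have "\<dots> < C" using centre by linarith
  finally show ?case .
qed

lemma scaled_integer_between:
  fixes \<alpha> \<beta> :: real
  assumes "\<alpha> < \<beta>" "0 < \<beta>"
  obtains N p :: int where "N > 0" "p > 0" "N * \<alpha> < p" "p < N * \<beta>"
proof -
  define lo where "lo = max \<alpha> 0"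
  have lo: "lo < \<beta>" "0 \<le> lo" "\<alpha> \<le> lo" using assms by (auto simp: lo_def)
  obtain N :: nat where N: "N > 1 / (\<beta> - lo)" using reals_Archimedean2 by blast
  have "1 / (\<beta> - lo) > 0" using lo by simp
  then have Npos: "real N > 0" using N by linarith
  have gap: "N * lo + 1 < N * \<beta>"
    using N lo by (simp add: field_simps)
  define p where "p = \<lfloor>N * lo\<rfloor> + 1"
  have p: "N * lo < p" "p \<le> N * lo + 1" unfolding p_def by linarith+
  have "N * \<alpha> \<le> N * lo" "0 \<le> N * lo" using lo Npos by simp_all
  with p gap have "N * \<alpha> < p" "p < N * \<beta>" "0 < p" by linarith+
  then show ?thesis using that[of "int N" p] Npos by simp
qed

lemma arm_weights_exist:
  assumes "m \<ge> 1" "\<forall>j<m. l j \<ge> 2" "p > 0" "of_int p * cfrac_seq l m < of_int C"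
  shows "\<exists>t w. t > 0 \<and> w 0 = t * p \<and> (\<forall>j<m. w j > 0) \<and> arm_positive l m (t * C) w"
  using assms
proof (induction m arbitrary: l p C rule: nat_induct_at_least)
  case base
  then have "real_of_int (p * l 0) < real_of_int C" by (simp add: cfrac_seq_def)
  then have "p * l 0 < C" by (simp only: of_int_less_iff)
  then show ?case using base
    by (intro exI[of _ 1] exI[of _ "\<lambda>_. p"]) (simp add: arm_positive_def algebra_simps)
next
  case (Suc m)
  let ?l' = "\<lambda>j. l (Suc j)"
  have cf': "cfrac_seq ?l' m > 1"
    using cfrac_seq_gt_1[OF Suc.hyps] Suc.prems by auto
  have "p * (l 0 - 1 / cfrac_seq ?l' m) < C"
    using Suc.prems(3) unfolding cfrac_seq_Suc[OF Suc.hyps] .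
  then have "p * l 0 - C < p / cfrac_seq ?l' m" by (simp add: algebra_simps)
  moreover have "0 < p / cfrac_seq ?l' m" using cf' Suc.prems(2) by simp
  ultimately obtain N p' :: int where N: "N > 0" "p' > 0"
    "real_of_int N * of_int (p * l 0 - C) < of_int p'" "p' < N * (p / cfrac_seq ?l' m)"
    by (rule scaled_integer_between)
  have "of_int p' * cfrac_seq ?l' m < of_int (N * p)"
    using N(4) cf' by (simp add: field_simps)
  then obtain t w' where tw: "t > 0" "w' 0 = t * p'" "\<forall>j<m. w' j > 0"
    "arm_positive ?l' m (t * (N * p)) w'"
    using Suc.IH[of ?l' p' "N * p"] Suc.prems N(2) by auto
  have "real_of_int (N * (p * l 0 - C)) < real_of_int p'" using N(3) by simp
  then have centre: "N * C - l 0 * (N * p) + p' > 0" by (simp only: of_int_less_iff) (simp add: algebra_simps)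
  define w where "w j = (if j = 0 then t * N * p else w' (j - 1))" for j
  have w: "w 0 = t * N * p" "w 1 = w' 0" "(\<lambda>j. w (Suc j)) = w'" by (auto simp: w_def)
  have "t * N * C - l 0 * w 0 + w 1 = t * (N * C - l 0 * (N * p) + p')"
    using w tw(2) by (simp add: algebra_simps)
  then have "t * N * C - l 0 * w 0 + w 1 > 0" using tw(1) centre by simp
  then have "arm_positive l (Suc m) (t * N * C) w"
    using arm_positive_Suc[OF Suc.hyps] tw(4) w by (simp add: algebra_simps)
  moreover have "\<forall>j<Suc m. w j > 0"
    using tw N Suc.prems(2) by (auto simp: w_def less_Suc_eq_0_disj)
  ultimately show ?case
    using tw(1) N(1) w(1) by (intro exI[of _ "t * N"] exI[of _ w]) simp
qed

(* The rescalings of all arms can be made equal by multiplying each arm by the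
   product of the other arms' factors. *)
lemma arm_weights_common_scale:
  fixes s :: nat and m :: "nat \<Rightarrow> nat" and ll :: "nat \<Rightarrow> nat \<Rightarrow> int"
  assumes hm: "\<forall>i<s. m i \<ge> 1" and hll: "\<forall>i<s. \<forall>j<m i. ll i j \<ge> 2"
    and p: "\<forall>i<s. p i > 0 \<and> of_int (p i) * cfrac_seq (ll i) (m i) < of_int C"
  obtains T W where "T > 0"
    "\<forall>i<s. W i 0 = T * p i \<and> (\<forall>j<m i. W i j > 0) \<and> arm_positive (ll i) (m i) (T * C) (W i)"
proof -
  have "\<forall>i<s. \<exists>t w. t > 0 \<and> w 0 = t * p i \<and> (\<forall>j<m i. w j > 0) \<and> arm_positive (ll i) (m i) (t * C) w"
    by (intro allI impI arm_weights_exist) (use hm hll p in auto)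
  then obtain t W0 where tW: "\<And>i. i < s \<Longrightarrow> t i > 0 \<and> W0 i 0 = t i * p i
      \<and> (\<forall>j<m i. W0 i j > 0) \<and> arm_positive (ll i) (m i) (t i * C) (W0 i)"
    by metis
  define T where "T = (\<Prod>i<s. t i)"
  define e where "e i = (\<Prod>i'\<in>{..<s} - {i}. t i')" for i
  have "T > 0" and e_pos: "\<And>i. e i > 0" unfolding T_def e_def using tW by (auto intro: prod_pos)
  have et: "e i * t i = T" if "i < s" for i
    unfolding e_def T_def using that by (simp add: prod.remove[of "{..<s}" i t] mult.commute)
  define W where "W i j = e i * W0 i j" for i j
  have "\<forall>i<s. W i 0 = T * p i \<and> (\<forall>j<m i. W i j > 0) \<and> arm_positive (ll i) (m i) (T * C) (W i)"
  proof (intro allI impI)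
    fix i assume i: "i < s"
    have "W i 0 = T * p i" using tW[OF i] et[OF i] by (simp add: W_def mult.assoc[symmetric])
    moreover have "\<forall>j<m i. W i j > 0" using tW[OF i] e_pos by (simp add: W_def)
    moreover have "arm_positive (ll i) (m i) (e i * (t i * C)) (\<lambda>j. e i * W0 i j)"
      by (rule arm_positive_scale) (use e_pos tW[OF i] in auto)
    then have "arm_positive (ll i) (m i) (T * C) (W i)"
      using et[OF i] by (simp add: W_def[abs_def] mult.assoc[symmetric])
    ultimately show "W i 0 = T * p i \<and> (\<forall>j<m i. W i j > 0) \<and> arm_positive (ll i) (m i) (T * C) (W i)"
      by blast
  qed
  then show ?thesis by (rule that[OF \<open>T > 0\<close>])
qed

lemma sum_star_comps:
  "(\<Sum>u\<in>star_comps s len. g u) = g None + (\<Sum>i<s. \<Sum>j<len i. g (Some (i, j)))"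
proof -
  have comps: "star_comps s len = insert None (Some ` (SIGMA i:{..<s}. {..<len i}))"
    by (auto simp: star_comps_def)
  have "(\<Sum>u\<in>star_comps s len. g u) = g None + (\<Sum>ij\<in>(SIGMA i:{..<s}. {..<len i}). g (Some ij))"
    unfolding comps by (subst sum.insert) (auto simp: sum.reindex)
  also have "\<dots> = g None + (\<Sum>i<s. \<Sum>j<len i. g (Some (i, j)))"
    by (subst sum.Sigma) (auto simp: split_def)
  finally show ?thesis .
qed

lemma star_form_sym: "star_form c a u v = star_form c a v u"
  by (cases u; cases v) auto

lemma sum_chain_row:
  fixes w :: "nat \<Rightarrow> 'b::comm_ring_1"
  assumes "j < L"
  shows "(\<Sum>j'<L. w j' * of_int (if j' = j then A else if j' = j + 1 \<or> j = j' + 1 then 1 else 0))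
     = w j * of_int A + (if j + 1 < L then w (j + 1) else 0) + (if j \<ge> 1 then w (j - 1) else 0)"
proof -
  have "(\<Sum>j'<L. w j' * of_int (if j' = j then A else if j' = j + 1 \<or> j = j' + 1 then 1 else 0))
     = (\<Sum>j'<L. (if j' = j then w j * of_int A else 0) + (if j' = j + 1 then w j' else 0)
         + (if j' + 1 = j then w j' else 0))"
    by (rule sum.cong) auto
  also have "\<dots> = (\<Sum>j'<L. (if j' = j then w j * of_int A else 0))
       + (\<Sum>j'<L. (if j' = j + 1 then w j' else 0)) + (\<Sum>j'<L. (if j' + 1 = j then w j' else 0))"
    by (simp add: sum.distrib)
  also have "(\<Sum>j'<L. (if j' + 1 = j then w j' else 0)) = (if j \<ge> 1 then w (j - 1) else 0)"
  proof (cases j)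
    case (Suc j0)
    then have "(\<Sum>j'<L. (if j' + 1 = j then w j' else 0)) = (\<Sum>j'<L. (if j' = j0 then w j' else 0))"
      by (intro sum.cong) auto
    with Suc assms show ?thesis by (simp add: sum.delta)
  qed simp
  finally show ?thesis using assms by (simp add: sum.delta)
qed

lemma star_row_centre:
  fixes w :: "(nat \<times> nat) option \<Rightarrow> 'b::comm_ring_1"
  assumes "\<forall>i<s. len i \<ge> 1"
  shows "(\<Sum>u\<in>star_comps s len. w u * of_int (star_form c a u None))
     = w None * of_int c + (\<Sum>i<s. w (Some (i, 0)))"
proof -
  have "(\<Sum>j<len i. w (Some (i, j)) * of_int (star_form c a (Some (i, j)) None)) = w (Some (i, 0))"
    if "i < s" for i
  proof -
    have "w (Some (i, j)) * of_int (if j = 0 then 1 else 0) = (if j = 0 then w (Some (i, j)) else 0)"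
      for j by simp
    moreover have "0 < len i" using assms that by auto
    ultimately show ?thesis by (simp add: sum.delta)
  qed
  then show ?thesis by (simp add: sum_star_comps)
qed

lemma star_row_arm:
  fixes w :: "(nat \<times> nat) option \<Rightarrow> 'b::comm_ring_1"
  assumes "i < s" "j < len i"
  shows "(\<Sum>u\<in>star_comps s len. w u * of_int (star_form c a u (Some (i, j))))
     = (if j = 0 then w None else w (Some (i, j - 1))) + w (Some (i, j)) * of_int (a i j)
       + (if j + 1 < len i then w (Some (i, j + 1)) else 0)"
proof -
  let ?arm = "\<lambda>i'. \<Sum>j'<len i'. w (Some (i', j')) * of_int (star_form c a (Some (i', j')) (Some (i, j)))"
  have "?arm i' = 0" if "i' \<noteq> i" for i'
    using that by simp
  then have "(\<Sum>i'<s. ?arm i') = ?arm i"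
    using assms(1) by (subst sum.remove[of _ i]) auto
  also have "\<dots> = (\<Sum>j'<len i. w (Some (i, j'))
      * of_int (if j' = j then a i j else if j' = j + 1 \<or> j = j' + 1 then 1 else 0))"
    by (rule sum.cong) auto
  also have "\<dots> = w (Some (i, j)) * of_int (a i j) + (if j + 1 < len i then w (Some (i, j + 1)) else 0)
       + (if j \<ge> 1 then w (Some (i, j - 1)) else 0)"
    by (rule sum_chain_row[OF assms(2)])
  finally show ?thesis
    unfolding sum_star_comps by (cases j) (simp_all add: algebra_simps)
qed

lemma star_quadratic_form:
  assumes "\<forall>i<s. len i \<ge> 1"
  shows "(\<Sum>u\<in>star_comps s len. \<Sum>v\<in>star_comps s len. x u * of_int (star_form c (\<lambda>i j. - a i j) u v) * x v)
    = of_int c * (x None)^2 + (\<Sum>i<s. arm_form (a i) (len i) (x None) (\<lambda>j. x (Some (i, j))))"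
proof -
  let ?Q = "star_form c (\<lambda>i j. - a i j)"
  define R where "R u = (\<Sum>v\<in>star_comps s len. x v * of_int (?Q v u))" for u
  have RC: "R None = x None * of_int c + (\<Sum>i<s. x (Some (i, 0)))"
    unfolding R_def by (rule star_row_centre[OF assms])
  have RA: "R (Some (i, j)) = (if j = 0 then x None else x (Some (i, j - 1)))
      - of_int (a i j) * x (Some (i, j)) + (if j + 1 < len i then x (Some (i, j + 1)) else 0)"
    if "i < s" "j < len i" for i j
    unfolding R_def star_row_arm[where len = len, OF that] by simp
  have "(\<Sum>u\<in>star_comps s len. \<Sum>v\<in>star_comps s len. x u * of_int (?Q u v) * x v)
     = (\<Sum>u\<in>star_comps s len. x u * R u)"
    unfolding R_def by (simp add: sum_distrib_left star_form_sym[of c _ _ ] algebra_simps)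
  also have "\<dots> = x None * R None + (\<Sum>i<s. \<Sum>j<len i. x (Some (i, j)) * R (Some (i, j)))"
    by (rule sum_star_comps)
  also have "\<dots> = of_int c * (x None)^2 + (\<Sum>i<s. arm_form (a i) (len i) (x None) (\<lambda>j. x (Some (i, j))))"
    unfolding RC arm_form_def
    by (simp add: RA sum.distrib sum_distrib_left power2_eq_square algebra_simps)
  finally show ?thesis .
qed

lemma star_arm_rows_positive_iff:
  assumes "i < s"
  shows "arm_positive (l i) (len i) (a None) (\<lambda>j. a (Some (i, j))) \<longleftrightarrow>
    (\<forall>j<len i. (\<Sum>u\<in>star_comps s len. a u * star_form c (\<lambda>i j. - l i j) u (Some (i, j))) > 0)"
proof -
  have "(\<Sum>u\<in>star_comps s len. a u * star_form c (\<lambda>i j. - l i j) u (Some (i, j)))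
      = (if j = 0 then a None else a (Some (i, j - 1))) - l i j * a (Some (i, j))
        + (if j + 1 < len i then a (Some (i, j + 1)) else 0)" if "j < len i" for j
    using star_row_arm[where len = len and w = a and c = c and a = "\<lambda>i j. - l i j", OF assms that]
    by (simp add: algebra_simps)
  then show ?thesis
    unfolding arm_positive_def by (metis (no_types, lifting))
qed

(* (2) -> (3): evaluate the form on the vector that is 1 at the centre and maximises
   every arm contribution; its value is -k + sum_i 1/[k^i]. *)
lemma neg_definite_imp_cfrac_sum:
  assumes hn: "\<forall>i<s. n i \<ge> 1" and hkk: "\<forall>i<s. \<forall>j<n i. kk i j \<ge> 2"
    and nd: "neg_definite (star_form (- k) (\<lambda>i j. - kk i j)) (star_comps s n)"
  shows "(\<Sum>i<s. 1 / cfrac_seq (kk i) (n i)) < of_int k"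
proof -
  have "\<forall>i<s. \<exists>y. arm_form (kk i) (n i) 1 y = 1 / cfrac_seq (kk i) (n i)"
    using arm_form_attained hn hkk by (metis power_one)
  then obtain Y where Y: "\<And>i. i < s \<Longrightarrow> arm_form (kk i) (n i) 1 (Y i) = 1 / cfrac_seq (kk i) (n i)"
    by metis
  define x where "x u = (case u of None \<Rightarrow> 1 | Some (i, j) \<Rightarrow> Y i j)" for u :: "(nat \<times> nat) option"
  have "None \<in> star_comps s n" by (simp add: star_comps_def)
  with nd have "(\<Sum>u\<in>star_comps s n. \<Sum>v\<in>star_comps s n.
      x u * of_int (star_form (- k) (\<lambda>i j. - kk i j) u v) * x v) < 0"
    unfolding neg_definite_def by (force simp: x_def)
  moreover have "(\<Sum>i<s. arm_form (kk i) (n i) (x None) (\<lambda>j. x (Some (i, j))))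
      = (\<Sum>i<s. 1 / cfrac_seq (kk i) (n i))"
    by (rule sum.cong) (simp_all add: x_def Y)
  ultimately show ?thesis
    unfolding star_quadratic_form[OF hn] by (simp add: x_def)
qed

(* (3) -> (2): if the centre value u is nonzero, the form is at most
   u^2 (sum_i 1/[k^i] - k) < 0; otherwise some arm form is negative and the others are <= 0. *)
lemma cfrac_sum_imp_neg_definite:
  assumes hn: "\<forall>i<s. n i \<ge> 1" and hkk: "\<forall>i<s. \<forall>j<n i. kk i j \<ge> 2"
    and lt: "(\<Sum>i<s. 1 / cfrac_seq (kk i) (n i)) < of_int k"
  shows "neg_definite (star_form (- k) (\<lambda>i j. - kk i j)) (star_comps s n)"
  unfolding neg_definite_def
proof (intro allI impI)
  fix x :: "(nat \<times> nat) option \<Rightarrow> real"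
  assume nonzero: "\<exists>u\<in>star_comps s n. x u \<noteq> 0"
  let ?arm = "\<lambda>i. arm_form (kk i) (n i) (x None) (\<lambda>j. x (Some (i, j)))"
  have bound: "?arm i \<le> (x None)^2 / cfrac_seq (kk i) (n i)" if "i < s" for i
    using arm_form_bound hn hkk that by simp
  have "(\<Sum>i<s. ?arm i) < of_int k * (x None)^2"
  proof (cases "x None = 0")
    case False
    have "(\<Sum>i<s. ?arm i) \<le> (\<Sum>i<s. (x None)^2 / cfrac_seq (kk i) (n i))"
      by (rule sum_mono) (use bound in auto)
    also have "\<dots> = (x None)^2 * (\<Sum>i<s. 1 / cfrac_seq (kk i) (n i))"
      by (simp add: sum_distrib_left)
    also have "\<dots> < (x None)^2 * of_int k" using False lt by simp
    finally show ?thesis by (simp add: mult.commute)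
  next
    case True
    then obtain i j where ij: "i < s" "j < n i" "x (Some (i, j)) \<noteq> 0"
      using nonzero by (auto simp: star_comps_def)
    have "?arm i < 0"
      using arm_form_neg[of "n i" "kk i" j] hn hkk ij True by auto
    moreover have "(\<Sum>i'\<in>{..<s} - {i}. ?arm i') \<le> 0"
      by (rule sum_nonpos) (use bound True in auto)
    ultimately have "(\<Sum>i<s. ?arm i) < 0"
      using ij by (simp add: sum.remove[of _ i])
    then show ?thesis using True by simp
  qed
  then show "(\<Sum>u\<in>star_comps s n. \<Sum>v\<in>star_comps s n.
      x u * of_int (star_form (- k) (\<lambda>i j. - kk i j) u v) * x v) < 0"
    unfolding star_quadratic_form[OF hn] by simp
qed

(* The arithmetic core of (4) -> (1): a large centre weight C and the largest admissible
   first arm weights p_i < C/[l^i] make the centre row positive. *)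
lemma centre_weights_exist:
  fixes cl :: "nat \<Rightarrow> real" and k :: int
  assumes cl: "\<forall>i<s. cl i > 1" and gt: "(\<Sum>i<s. 1 / cl i) > real s - of_int k"
  obtains C :: int and p :: "nat \<Rightarrow> int" where "C > 0"
    "\<forall>i<s. p i > 0 \<and> of_int (p i) * cl i < of_int C" "C * (k - int s) + (\<Sum>i<s. p i) > 0"
proof -
  define \<sigma> where "\<sigma> = (\<Sum>i<s. 1 / cl i) - (real s - k)"
  have \<sigma>: "\<sigma> > 0" using gt by (simp add: \<sigma>_def)
  have cl_sum: "cl i \<le> (\<Sum>i<s. cl i)" if "i < s" for i
    using that cl by (intro member_le_sum) (auto intro: less_imp_le order.strict_trans[OF zero_less_one])
  have sum_cl: "0 \<le> (\<Sum>i<s. cl i)"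
    using cl by (intro sum_nonneg) (auto intro: less_imp_le order.strict_trans[OF zero_less_one])
  have s_\<sigma>: "s / \<sigma> \<ge> 0" using \<sigma> by simp
  define C :: int where "C = \<lceil>s / \<sigma> + (\<Sum>i<s. cl i)\<rceil> + 1"
  have C_gt: "real_of_int C > s / \<sigma> + (\<Sum>i<s. cl i)"
    unfolding C_def by linarith
  have "C > 0" using C_gt sum_cl s_\<sigma> by linarith
  have C_cl: "real_of_int C > cl i" if "i < s" for i
    using C_gt s_\<sigma> cl_sum[OF that] by linarith
  have "real_of_int C > s / \<sigma>" using C_gt sum_cl by linarith
  then have "C * \<sigma> > s" using \<sigma> by (simp add: field_simps)
  define p where "p i = \<lceil>C / cl i\<rceil> - 1" for i
  have p: "p i > 0 \<and> of_int (p i) * cl i < of_int C \<and> of_int (p i) \<ge> C / cl i - 1" if "i < s" for i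
  proof -
    have cl_pos: "cl i > 0" using cl that by auto
    then have "C / cl i > 1" using C_cl[OF that] by (simp add: field_simps)
    moreover have "of_int \<lceil>C / cl i\<rceil> - 1 < C / cl i" "C / cl i \<le> of_int \<lceil>C / cl i\<rceil>"
      by linarith+
    ultimately show ?thesis
      using cl_pos unfolding p_def by (auto simp: field_simps)
  qed
  have "(\<Sum>i<s. real_of_int (p i)) \<ge> (\<Sum>i<s. C / cl i - 1)"
    by (rule sum_mono) (use p in auto)
  also have "(\<Sum>i<s. C / cl i - 1) = C * (\<sigma> + (s - k)) - s"
    by (simp add: \<sigma>_def sum_subtractf sum_distrib_left)
  finally have "real_of_int (C * (k - int s) + (\<Sum>i<s. p i)) > 0"
    using \<open>C * \<sigma> > s\<close> by (simp add: algebra_simps)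
  then have "C * (k - int s) + (\<Sum>i<s. p i) > 0" by (simp only: of_int_0_less_iff)
  moreover have "\<forall>i<s. p i > 0 \<and> of_int (p i) * cl i < of_int C" using p by blast
  ultimately show ?thesis using that[OF \<open>C > 0\<close>] by blast
qed

(* (1) -> (4): the centre row gives C (k - s) + sum_i a_i > 0, and each arm bounds its
   first weight a_i by C/[l^i]. *)
lemma pos_normal_support_imp_cfrac_sum:
  assumes hm: "\<forall>i<s. m i \<ge> 1" and hll: "\<forall>i<s. \<forall>j<m i. ll i j \<ge> 2"
    and pns: "pos_normal_support (star_form (k - int s) (\<lambda>i j. - ll i j)) (star_comps s m)"
  shows "(\<Sum>i<s. 1 / cfrac_seq (ll i) (m i)) > real s - of_int k"
proof -
  let ?S = "star_comps s m" and ?Q = "star_form (k - int s) (\<lambda>i j. - ll i j)"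
  obtain a where a_pos: "\<forall>u\<in>?S. a u > 0" and rows: "\<forall>v\<in>?S. (\<Sum>u\<in>?S. a u * ?Q u v) > 0"
    using pns unfolding pos_normal_support_def by blast
  have comps: "None \<in> ?S" "\<And>i j. Some (i, j) \<in> ?S \<longleftrightarrow> i < s \<and> j < m i"
    by (auto simp: star_comps_def)
  define C where "C = a None"
  have "C > 0" using a_pos comps by (simp add: C_def)
  have "(\<Sum>u\<in>?S. a u * ?Q u None) > 0" using rows comps by blast
  then have "C * (k - int s) + (\<Sum>i<s. a (Some (i, 0))) > 0"
    using star_row_centre[OF hm, of a "k - int s" "\<lambda>i j. - ll i j"] by (simp add: C_def)
  then have "0 < real_of_int (C * (k - int s) + (\<Sum>i<s. a (Some (i, 0))))"
    by (simp only: of_int_0_less_iff)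
  then have centre: "0 < C * (k - real s) + (\<Sum>i<s. real_of_int (a (Some (i, 0))))"
    by simp
  have arm: "real_of_int (a (Some (i, 0))) \<le> C / cfrac_seq (ll i) (m i)" if "i < s" for i
  proof -
    have "\<forall>j<m i. (\<Sum>u\<in>?S. a u * ?Q u (Some (i, j))) > 0"
      by (intro allI impI bspec[OF rows]) (simp add: comps that)
    then have "arm_positive (ll i) (m i) C (\<lambda>j. a (Some (i, j)))"
      unfolding C_def by (rule star_arm_rows_positive_iff[OF that, THEN iffD2])
    then have "a (Some (i, 0)) * cfrac_seq (ll i) (m i) < C"
      using arm_weights_bound[of "m i" "ll i" "\<lambda>j. a (Some (i, j))" C] hm hll a_pos comps that
      by auto
    moreover have "cfrac_seq (ll i) (m i) > 0"
      using cfrac_seq_gt_1[of "m i" "ll i"] hm hll that by auto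
    ultimately show ?thesis by (simp add: field_simps)
  qed
  have "(\<Sum>i<s. real_of_int (a (Some (i, 0)))) \<le> (\<Sum>i<s. C / cfrac_seq (ll i) (m i))"
    by (rule sum_mono) (simp add: arm)
  with centre have "0 < C * (k - real s) + (\<Sum>i<s. C / cfrac_seq (ll i) (m i))"
    by linarith
  also have "\<dots> = C * ((k - real s) + (\<Sum>i<s. 1 / cfrac_seq (ll i) (m i)))"
    by (simp add: sum_distrib_left algebra_simps)
  finally show ?thesis using \<open>C > 0\<close> by (simp add: zero_less_mult_iff)
qed

lemma cfrac_sum_imp_pos_normal_support:
  assumes hm: "\<forall>i<s. m i \<ge> 1" and hll: "\<forall>i<s. \<forall>j<m i. ll i j \<ge> 2"
    and gt: "(\<Sum>i<s. 1 / cfrac_seq (ll i) (m i)) > real s - of_int k"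
  shows "pos_normal_support (star_form (k - int s) (\<lambda>i j. - ll i j)) (star_comps s m)"
proof -
  let ?S = "star_comps s m" and ?Q = "star_form (k - int s) (\<lambda>i j. - ll i j)"
  have cl: "\<forall>i<s. cfrac_seq (ll i) (m i) > 1"
    by (intro allI impI cfrac_seq_gt_1) (use hm hll in auto)
  obtain C p where "C > 0" and p: "\<forall>i<s. p i > 0 \<and> of_int (p i) * cfrac_seq (ll i) (m i) < of_int C"
    and centre: "C * (k - int s) + (\<Sum>i<s. p i) > 0"
    by (rule centre_weights_exist[OF cl gt])
  obtain T W where "T > 0" and W: "\<forall>i<s. W i 0 = T * p i \<and> (\<forall>j<m i. W i j > 0)
      \<and> arm_positive (ll i) (m i) (T * C) (W i)"
    by (rule arm_weights_common_scale[OF hm hll p])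
  define a where "a u = (case u of None \<Rightarrow> T * C | Some (i, j) \<Rightarrow> W i j)" for u
  have "\<forall>u\<in>?S. a u > 0"
    using \<open>T > 0\<close> \<open>C > 0\<close> W by (auto simp: star_comps_def a_def)
  moreover have "(\<Sum>u\<in>?S. a u * ?Q u None) > 0"
  proof -
    have "(\<Sum>i<s. a (Some (i, 0))) = (\<Sum>i<s. T * p i)"
      using W by (intro sum.cong) (auto simp: a_def)
    then have "(\<Sum>u\<in>?S. a u * ?Q u None) = T * (C * (k - int s) + (\<Sum>i<s. p i))"
      using star_row_centre[OF hm, of a "k - int s" "\<lambda>i j. - ll i j"]
      by (simp add: a_def sum_distrib_left algebra_simps)
    then show ?thesis using \<open>T > 0\<close> centre by simp
  qed
  moreover have "(\<Sum>u\<in>?S. a u * ?Q u (Some (i, j))) > 0" if "i < s" "j < m i" for i j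
  proof -
    have "arm_positive (ll i) (m i) (a None) (\<lambda>j. a (Some (i, j)))"
      using W \<open>i < s\<close> by (simp add: a_def)
    then have "\<forall>j<m i. (\<Sum>u\<in>?S. a u * ?Q u (Some (i, j))) > 0"
      by (rule star_arm_rows_positive_iff[OF \<open>i < s\<close>, THEN iffD1])
    then show ?thesis using \<open>j < m i\<close> by blast
  qed
  ultimately show ?thesis
    unfolding pos_normal_support_def by (auto simp: star_comps_def)
qed

theorem lemma6:
  fixes k :: int and s :: nat
    and n m :: "nat \<Rightarrow> nat"
    and kk ll :: "nat \<Rightarrow> nat \<Rightarrow> int"
  assumes hk: "k \<ge> 1"
    and hn: "\<forall>i<s. n i \<ge> 1"
    and hm: "\<forall>i<s. m i \<ge> 1"
    and hkk: "\<forall>i<s. \<forall>j<n i. kk i j \<ge> 2"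
    and hll: "\<forall>i<s. \<forall>j<m i. ll i j \<ge> 2"
    and hchain: "\<forall>i<s. fibre_chain
        (map (\<lambda>j. - kk i j) [0..<n i] @ [-1] @ rev (map (\<lambda>j. - ll i j) [0..<m i]))"
  shows
    "(pos_normal_support (star_form (k - int s) (\<lambda>i j. - ll i j)) (star_comps s m)
        \<longleftrightarrow> neg_definite (star_form (- k) (\<lambda>i j. - kk i j)) (star_comps s n))
   \<and> (neg_definite (star_form (- k) (\<lambda>i j. - kk i j)) (star_comps s n)
        \<longleftrightarrow> (\<Sum>i<s. 1 / cfrac (map (kk i) [0..<n i])) < real_of_int k)
   \<and> ((\<Sum>i<s. 1 / cfrac (map (kk i) [0..<n i])) < real_of_int k
        \<longleftrightarrow> (\<Sum>i<s. 1 / cfrac (map (ll i) [0..<m i])) > real s - real_of_int k)"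
proof -
  have iff_1_4: "pos_normal_support (star_form (k - int s) (\<lambda>i j. - ll i j)) (star_comps s m)
      \<longleftrightarrow> (\<Sum>i<s. 1 / cfrac (map (ll i) [0..<m i])) > real s - real_of_int k"
    using pos_normal_support_imp_cfrac_sum[OF hm hll] cfrac_sum_imp_pos_normal_support[OF hm hll]
    unfolding cfrac_seq_def by blast
  have iff_2_3: "neg_definite (star_form (- k) (\<lambda>i j. - kk i j)) (star_comps s n)
      \<longleftrightarrow> (\<Sum>i<s. 1 / cfrac (map (kk i) [0..<n i])) < real_of_int k"
    using neg_definite_imp_cfrac_sum[OF hn hkk] cfrac_sum_imp_neg_definite[OF hn hkk]
    unfolding cfrac_seq_def by blast
  have iff_3_4: "(\<Sum>i<s. 1 / cfrac (map (kk i) [0..<n i])) < real_of_int k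
      \<longleftrightarrow> (\<Sum>i<s. 1 / cfrac (map (ll i) [0..<m i])) > real s - real_of_int k"
    unfolding cfrac_sums_complementary[OF hn hm hkk hll hchain] by linarith
  show ?thesis using iff_1_4 iff_2_3 iff_3_4 by blast
qed

end
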